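(* In the setting described in the context, if either ($0<v_0<1$ and $\omega_0>-\frac{\nu}{2}f_0(v_0)$) or ($v_0>1$ and $\omega_0<-\frac{\nu}{2}f_0(v_0)$), then type A blowup occurs.
   Context: Fix $\nu>0$, $v_0>0$ with $v_0\neq1$, and $\omega_0\in\mathbb{R}$. Consider the real ODE system $\frac{d\omega_{-2,i}}{dt}=\omega_{-2,i}^2\frac{1-2v_c^2+5v_c^4}{4v_c^2(1-v_c^2)^2}-\nu\omega_{-2,i}$, $\frac{dv_c}{dt}=-\omega_{-2,i}\frac{1+v_c^2}{4v_c(1-v_c^2)}$ with $v_c(0)=v_0$, $\omega_{-2,i}(0)=\omega_0$; its solution (continued through $v_c=1$) is characterized as follows. Let $F(v)=\frac{v(v^2-1)}{(v^2+1)^2}+\arctan v$, which is a strictly increasing bijection from $(0,\infty)$ onto $(0,\pi/2)$, and let $G(t)=F(v_0)+\frac{2\omega_0 v_0(1-e^{-\nu t})}{\nu(v_0^2-1)(v_0^2+1)^2}$. Then $v_c(t)$ is defined by $F(v_c(t))=G(t)$ for as long as $G(t)\in(0,\pi/2)$, and $\omega_{-2,i}(t)=\omega_0e^{-\nu t}\frac{v_0}{v_c(t)}\frac{v_c(t)^2-1}{v_0^2-1}\left(\frac{v_c(t)^2+1}{v_0^2+1}\right)^2$. Type A blowup means: there is a finite $t_c>0$ with $v_c(t)>0$ on $[0,t_c)$ and $v_c(t)\to0^+$ as $t\to t_c^-$. Type B blowup means: there is a finite $t_c>0$ with $v_c(t)\in(0,\infty)$ on $[0,t_c)$ and $v_c(t)\to+\infty$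 as $t\to t_c^-$. Here $f_0(x)=(x^2-1)^2+\frac{(x^2+1)^2}{x}(x^2-1)\arctan(x)$ and $f_\infty(x)=(x^2-1)^2+\frac{(x^2+1)^2}{x}(x^2-1)\left(\arctan(x)-\frac{\pi}{2}\right)$ for $x>0$. *)

theory Defs
  imports "HOL-Analysis.Analysis"
begin

definition Fv :: "real \<Rightarrow> real" where
  "Fv v = v * (v^2 - 1) / (v^2 + 1)^2 + arctan v"

definition Gt :: "real \<Rightarrow> real \<Rightarrow> real \<Rightarrow> real \<Rightarrow> real" where
  "Gt \<nu> v0 \<omega>0 t = Fv v0 + 2 * \<omega>0 * v0 * (1 - exp (- \<nu> * t)) / (\<nu> * (v0^2 - 1) * (v0^2 + 1)^2)"

text \<open>The solution v_c(t): the unique v > 0 with F v = G t (meaningful while G t lies in (0, pi/2)).\<close>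
definition vc :: "real \<Rightarrow> real \<Rightarrow> real \<Rightarrow> real \<Rightarrow> real" where
  "vc \<nu> v0 \<omega>0 t = (THE v. v > 0 \<and> Fv v = Gt \<nu> v0 \<omega>0 t)"

definition f0 :: "real \<Rightarrow> real" where
  "f0 x = (x^2 - 1)^2 + (x^2 + 1)^2 / x * (x^2 - 1) * arctan x"

definition typeA_blowup :: "real \<Rightarrow> real \<Rightarrow> real \<Rightarrow> bool" where
  "typeA_blowup \<nu> v0 \<omega>0 \<longleftrightarrow>
     (\<exists>tc > 0. (\<forall>t \<in> {0..<tc}. 0 < Gt \<nu> v0 \<omega>0 t \<and> Gt \<nu> v0 \<omega>0 t < pi/2 \<and> vc \<nu> v0 \<omega>0 t > 0)
        \<and> filterlim (vc \<nu> v0 \<omega>0) (at_right 0) (at_left tc))"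

end

theory Submission imports Defs begin

(* F'(v) = 8 v^2 / (v^2 + 1)^3 > 0 and F(v) + F(1/v) = pi/2, so F maps [0, oo) increasingly onto
   [0, pi/2) with F(0) = 0; hence v_c = F^-1 o G tends to 0 from above exactly when G does.
   G(t) = F(v0) + c (1 - e^(-nu t)) moves monotonically from F(v0) towards F(v0) + c, and by the
   identity f0(v) = (v^2 - 1)(v^2 + 1)^2 / v * F(v) the hypothesis says precisely F(v0) + c < 0.
   So G reaches 0 at a finite time t_c and stays in (0, F(v0)] before it. *)

lemma power2_add_1_pos: "0 < (x::real)^2 + 1"
  by (smt (verit) zero_le_power2)

lemma has_real_derivative_Fv: "(Fv has_real_derivative 8 * x^2 / (x^2 + 1)^3) (at x)"
proof -
  have pos: "x^2 + 1 > 0" "1 + x^2 > 0"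
    using power2_add_1_pos[of x] by simp_all
  show ?thesis
    unfolding Fv_def[abs_def]
    apply (intro derivative_eq_intros)
        apply (rule refl | simp)+
     apply (use pos in simp)
    apply (rule refl)+
    apply (simp add: divide_simps pos[THEN less_imp_neq] pos[THEN less_imp_neq, symmetric])
    apply algebra
    done
qed

lemma continuous_on_Fv: "continuous_on S Fv"
  using has_real_derivative_Fv DERIV_isCont continuous_at_imp_continuous_on by blast

lemma Fv_0 [simp]: "Fv 0 = 0"
  by (simp add: Fv_def)

lemma Fv_1: "Fv 1 = pi / 4"
  by (simp add: Fv_def)

lemma Fv_strict_mono:
  assumes "0 \<le> a" "a < b"
  shows "Fv a < Fv b"
proof -
  obtain z where z: "a < z" "z < b" "Fv b - Fv a = (b - a) * (8 * z^2 / (z^2 + 1)^3)"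
    using MVT2[OF assms(2), of Fv "\<lambda>x. 8 * x^2 / (x^2 + 1)^3"] has_real_derivative_Fv by blast
  have "8 * z^2 / (z^2 + 1)^3 > 0"
    using z(1) assms(1) power2_add_1_pos[of z] by simp
  with z(3) assms(2) show ?thesis
    by (smt (verit) mult_pos_pos)
qed

lemma Fv_less_iff: "0 \<le> a \<Longrightarrow> 0 \<le> b \<Longrightarrow> Fv a < Fv b \<longleftrightarrow> a < b"
  using Fv_strict_mono[of a b] Fv_strict_mono[of b a] by (cases a b rule: linorder_cases) auto

lemma Fv_pos: "0 < v \<Longrightarrow> 0 < Fv v"
  using Fv_strict_mono[of 0 v] by simp

lemma Fv_add_Fv_inverse:
  assumes "v > 0"
  shows "Fv v + Fv (1 / v) = pi / 2"
proof -
  have arctan: "arctan (1 / v) = pi / 2 - arctan v"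
    using arctan_inverse[of v] assms by (simp add: inverse_eq_divide)
  have "(1 / v) * ((1 / v)^2 - 1) / ((1 / v)^2 + 1)^2 = - (v * (v^2 - 1) / (v^2 + 1)^2)"
    using assms power2_add_1_pos[of v] by (simp add: divide_simps) algebra
  then show ?thesis
    unfolding Fv_def arctan by linarith
qed

lemma Fv_less_pi_half: "0 < v \<Longrightarrow> Fv v < pi / 2"
  using Fv_add_Fv_inverse[of v] Fv_pos[of "1 / v"] by simp

lemma Fv_surj:
  assumes "0 < y" "y < pi / 2"
  obtains v where "v > 0" "Fv v = y"
proof -
  have hit: "\<exists>u>0. Fv u = z" if z: "0 < z" "z \<le> pi / 4" for z
  proof -
    obtain u where "0 \<le> u" "u \<le> 1" "Fv u = z"
      using IVT'[of Fv 0 z 1] z continuous_on_Fv by (auto simp: Fv_1)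
    with \<open>0 < z\<close> show ?thesis
      by (metis Fv_0 less_eq_real_def)
  qed
  show ?thesis
  proof (cases "y \<le> pi / 4")
    case True
    with hit assms(1) that show ?thesis by blast
  next
    case False
    then obtain u where "u > 0" "Fv u = pi / 2 - y"
      using hit[of "pi / 2 - y"] assms(2) by auto
    then show ?thesis
      using that[of "1 / u"] Fv_add_Fv_inverse[of u] by simp
  qed
qed

lemma THE_Fv_eq:
  assumes "0 < y" "y < pi / 2"
  shows "(THE v. v > 0 \<and> Fv v = y) > 0 \<and> Fv (THE v. v > 0 \<and> Fv v = y) = y"
proof (rule theI')
  obtain v where "v > 0" "Fv v = y"
    using Fv_surj assms by blast
  moreover have "w = v" if "w > 0" "Fv w = y" for w
    using Fv_less_iff[of v w] Fv_less_iff[of w v] that \<open>v > 0\<close> \<open>Fv v = y\<close> by auto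
  ultimately show "\<exists>!v. v > 0 \<and> Fv v = y"
    by blast
qed

lemma filterlim_vc_at_right_0:
  assumes lim: "(Gt \<nu> v0 \<omega>0 \<longlongrightarrow> 0) F"
    and range: "eventually (\<lambda>t. 0 < Gt \<nu> v0 \<omega>0 t \<and> Gt \<nu> v0 \<omega>0 t < pi / 2) F"
  shows "filterlim (vc \<nu> v0 \<omega>0) (at_right 0) F"
proof -
  have solves: "eventually (\<lambda>t. vc \<nu> v0 \<omega>0 t > 0 \<and> Fv (vc \<nu> v0 \<omega>0 t) = Gt \<nu> v0 \<omega>0 t) F"
    using range unfolding vc_def by (rule eventually_mono) (use THE_Fv_eq in blast)
  have "eventually (\<lambda>t. a < vc \<nu> v0 \<omega>0 t) F" if "a < 0" for a
    using solves by eventually_elim (use that in auto)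
  moreover have "eventually (\<lambda>t. vc \<nu> v0 \<omega>0 t < a) F" if "a > 0" for a
  proof -
    have "eventually (\<lambda>t. Gt \<nu> v0 \<omega>0 t < Fv a) F"
      using order_tendstoD(2)[OF lim Fv_pos[OF that]] .
    with solves show ?thesis
      by eventually_elim (metis Fv_less_iff less_imp_le that)
  qed
  ultimately have "(vc \<nu> v0 \<omega>0 \<longlongrightarrow> 0) F"
    by (rule order_tendstoI)
  moreover have "eventually (\<lambda>t. vc \<nu> v0 \<omega>0 t \<in> {0<..} \<and> vc \<nu> v0 \<omega>0 t \<noteq> 0) F"
    using solves by eventually_elim auto
  ultimately show ?thesis
    unfolding filterlim_at by simp
qed

lemma exp_relaxation_first_zero:
  fixes \<nu> a c :: real
  assumes "\<nu> > 0" "a > 0" "a + c < 0"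
  obtains tc where "tc > 0"
    and "\<And>t. t \<in> {0..<tc} \<Longrightarrow> 0 < a + c * (1 - exp (- \<nu> * t)) \<and> a + c * (1 - exp (- \<nu> * t)) \<le> a"
    and "((\<lambda>t. a + c * (1 - exp (- \<nu> * t))) \<longlongrightarrow> 0) (at_left tc)"
proof -
  define g where "g t = a + c * (1 - exp (- \<nu> * t))" for t
  define tc where "tc = ln (c / (a + c)) / \<nu>"
  have "c < 0" "c / (a + c) > 1"
    using assms by (auto simp: divide_simps)
  then have "tc > 0"
    unfolding tc_def using assms(1) by simp
  have "exp (- \<nu> * tc) = (a + c) / c"
    unfolding tc_def using assms \<open>c / (a + c) > 1\<close> by (simp add: exp_minus field_simps)
  then have "g tc = 0"
    unfolding g_def using \<open>c < 0\<close> by (simp add: field_simps)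
  have "0 < g t \<and> g t \<le> a" if "t \<in> {0..<tc}" for t
  proof -
    have "exp (- \<nu> * tc) < exp (- \<nu> * t)" "exp (- \<nu> * t) \<le> 1"
      using that assms(1) by auto
    then have "g tc < g t" "g t \<le> a"
      unfolding g_def using \<open>c < 0\<close> by (auto simp: mult_nonpos_nonneg)
    with \<open>g tc = 0\<close> show ?thesis by simp
  qed
  moreover have "(g \<longlongrightarrow> 0) (at_left tc)"
    unfolding g_def[abs_def] \<open>g tc = 0\<close>[symmetric, unfolded g_def]
    by (intro tendsto_intros)
  ultimately show ?thesis
    using that \<open>tc > 0\<close> unfolding g_def by blast
qed

lemma f0_eq_Fv: "x > 0 \<Longrightarrow> f0 x = (x^2 - 1) * (x^2 + 1)^2 / x * Fv x"
  using power2_add_1_pos[of x] unfolding f0_def Fv_def by (simp add: divide_simps) algebra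

lemma Gt_asymptote_neg:
  fixes \<nu> v0 \<omega>0 :: real
  assumes "\<nu> > 0" "v0 > 0"
    and "(v0 < 1 \<and> \<omega>0 > - (\<nu> / 2) * f0 v0) \<or> (v0 > 1 \<and> \<omega>0 < - (\<nu> / 2) * f0 v0)"
  shows "Fv v0 + 2 * \<omega>0 * v0 / (\<nu> * (v0^2 - 1) * (v0^2 + 1)^2) < 0"
proof -
  define K where "K = (v0^2 - 1) * (v0^2 + 1)^2 / v0"
  have "K \<noteq> 0"
    using assms(2,3) power2_add_1_pos[of v0] unfolding K_def by (auto simp: power2_eq_1_iff)
  have sign_K: "(v0 < 1 \<longrightarrow> K < 0) \<and> (v0 > 1 \<longrightarrow> K > 0)"
    unfolding K_def using assms(2) power2_add_1_pos[of v0]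
    by (simp_all add: divide_neg_pos mult_neg_pos power_less_one_iff one_less_power)
  have "Fv v0 + 2 * \<omega>0 * v0 / (\<nu> * (v0^2 - 1) * (v0^2 + 1)^2) = Fv v0 + 2 * \<omega>0 / (\<nu> * K)"
    unfolding K_def using assms(2) by simp
  also have "\<dots> = (\<omega>0 + \<nu> / 2 * f0 v0) / (\<nu> * K / 2)"
    using assms(1) \<open>K \<noteq> 0\<close> f0_eq_Fv[OF assms(2)] unfolding K_def[symmetric]
    by (simp add: field_simps)
  also have "\<dots> < 0"
    using assms(1,3) sign_K by (auto simp: divide_pos_neg divide_neg_pos mult_pos_neg)
  finally show ?thesis .
qed

theorem lemma3p5:
  fixes \<nu> v0 \<omega>0 :: real
  assumes "\<nu> > 0" and "v0 > 0" and "v0 \<noteq> 1"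
    and "(v0 < 1 \<and> \<omega>0 > - (\<nu> / 2) * f0 v0) \<or> (v0 > 1 \<and> \<omega>0 < - (\<nu> / 2) * f0 v0)"
  shows "typeA_blowup \<nu> v0 \<omega>0"
proof -
  define c where "c = 2 * \<omega>0 * v0 / (\<nu> * (v0^2 - 1) * (v0^2 + 1)^2)"
  have G: "Gt \<nu> v0 \<omega>0 = (\<lambda>t. Fv v0 + c * (1 - exp (- \<nu> * t)))"
    unfolding Gt_def c_def by auto
  obtain tc where "tc > 0"
    and range: "\<And>t. t \<in> {0..<tc} \<Longrightarrow> 0 < Gt \<nu> v0 \<omega>0 t \<and> Gt \<nu> v0 \<omega>0 t \<le> Fv v0"
    and lim: "(Gt \<nu> v0 \<omega>0 \<longlongrightarrow> 0) (at_left tc)"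
    using exp_relaxation_first_zero[OF assms(1) Fv_pos[OF assms(2)]]
      Gt_asymptote_neg[OF assms(1,2,4)] unfolding G c_def by blast
  have in_range: "0 < Gt \<nu> v0 \<omega>0 t \<and> Gt \<nu> v0 \<omega>0 t < pi / 2" if "t \<in> {0..<tc}" for t
    using range[OF that] Fv_less_pi_half[OF assms(2)] by linarith
  have "vc \<nu> v0 \<omega>0 t > 0" if "t \<in> {0..<tc}" for t
    using THE_Fv_eq in_range[OF that] unfolding vc_def by blast
  moreover have "filterlim (vc \<nu> v0 \<omega>0) (at_right 0) (at_left tc)"
  proof (rule filterlim_vc_at_right_0[OF lim])
    show "eventually (\<lambda>t. 0 < Gt \<nu> v0 \<omega>0 t \<and> Gt \<nu> v0 \<omega>0 t < pi / 2) (at_left tc)"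
      using eventually_at_left_real[OF \<open>tc > 0\<close>] by eventually_elim (use in_range in auto)
  qed
  ultimately show ?thesis
    unfolding typeA_blowup_def using in_range \<open>tc > 0\<close> by blast
qed

end
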